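(* Let $x_i,y_i\in\mathbb{Z}$ ($1\le i\le N$) with $x_i<x_{i+1}$ and $y_i<y_{i+1}$ for all $i$. For $\sigma\in\mathbb{S}_N$ define the Laurent monomial $$h_\sigma(\xi_1,\dots,\xi_N)=\prod_{(b,a)}\frac{\xi_b}{\xi_a}\prod_{i=1}^N\xi_{\sigma(i)}^{\,x_i-y_{\sigma(i)}-1},$$ the first product over all inversions $(b,a)$ of $\sigma$, and for $\gamma\in\{1,\dots,N\}$ let $h^\gamma_\sigma$ be the function of $\eta$ and $\xi_\delta$ ($\delta\neq\gamma$) obtained by substituting $\xi_\gamma=\eta/\prod_{\delta\ne\gamma}\xi_\delta$ into $h_\sigma$. (i) If $\sigma,\sigma'\in\mathbb{S}_N$ differ only by an interchange of two adjacent entries $\alpha$ and $\beta$, and $\gamma\ne\alpha,\beta$, then $h^\gamma_\sigma|_{\xi_\alpha=\xi_\beta}=h^\gamma_{\sigma'}|_{\xi_\alpha=\xi_\beta}$. (ii) If moreover $\gamma$ appears to the right of $\alpha$ and $\beta$ (in $\sigma$, equivalently in $\sigma'$) and $\gamma<\alpha,\beta$, then the exponents of $\xi_\alpha$ and of $\xi_\beta$ in $h^\gamma_\sigma$ and in $h^\gamma_{\sigma'}$ are at most $0$.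
   Context: Permutations are in one-line notation $\sigma(1)\cdots\sigma(N)$; an inversion $(b,a)$ of $\sigma$ is a pair of entries with $b>a$ and $b$ appearing to the left of $a$ in $\sigma$. *)

theory Defs
  imports "HOL-Combinatorics.Permutations" "HOL-Library.Function_Algebras"
begin

text \<open>Laurent monomials in variables of type 'v are represented by their exponent
  maps 'v => int (product of monomials = sum of exponent maps).\<close>

definition mscale :: "int \<Rightarrow> ('v \<Rightarrow> int) \<Rightarrow> ('v \<Rightarrow> int)" where
  "mscale c e = (\<lambda>v. c * e v)"

definition mvar :: "'v \<Rightarrow> ('v \<Rightarrow> int)" where
  "mvar c = (\<lambda>v. if v = c then 1 else 0)"

definition inversions :: "nat \<Rightarrow> (nat \<Rightarrow> nat) \<Rightarrow> (nat \<times> nat) set" where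
  "inversions N \<sigma> = {(\<sigma> i, \<sigma> j) | i j. 1 \<le> i \<and> i < j \<and> j \<le> N \<and> \<sigma> i > \<sigma> j}"

definition hmon :: "nat \<Rightarrow> (nat \<Rightarrow> int) \<Rightarrow> (nat \<Rightarrow> int) \<Rightarrow> (nat \<Rightarrow> nat) \<Rightarrow> (nat \<Rightarrow> int)" where
  "hmon N x y \<sigma> =
     (\<Sum>(b,a)\<in>inversions N \<sigma>. mvar b - mvar a)
     + (\<Sum>i=1..N. mscale (x i - y (\<sigma> i) - 1) (mvar (\<sigma> i)))"

text \<open>Substitution xi_gamma := eta / prod_{delta ~= gamma} xi_delta. The result is a monomial
  in the variables eta (= None) and xi_delta (= Some delta).\<close>
definition hsubst :: "nat \<Rightarrow> nat \<Rightarrow> (nat \<Rightarrow> int) \<Rightarrow> (nat option \<Rightarrow> int)" where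
  "hsubst N \<gamma> m =
     (\<lambda>v. case v of None \<Rightarrow> 0 | Some d \<Rightarrow> if d = \<gamma> then 0 else m d)
     + mscale (m \<gamma>) (mvar None - (\<Sum>d\<in>{1..N} - {\<gamma>}. mvar (Some d)))"

text \<open>Restriction of a monomial to xi_a = xi_b (substituting xi_b := xi_a).\<close>
definition identify :: "'v \<Rightarrow> 'v \<Rightarrow> ('v \<Rightarrow> int) \<Rightarrow> ('v \<Rightarrow> int)" where
  "identify a b e = (\<lambda>v. if v = b then 0 else e v) + mscale (e b) (mvar a)"

end

theory Submission
  imports Defs
begin

text \<open>Writing \<open>\<pi> = \<sigma>\<^sup>-\<^sup>1\<close> for the position map, the exponent of \<open>\<xi>\<^sub>v\<close> in \<open>h\<^sub>\<sigma>\<close> is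
  (number of smaller entries to the right of \<open>v\<close>) \<open>-\<close> (number of larger entries to its left)
  \<open>+ x\<^bsub>\<pi> v\<^esub> - y\<^sub>v - 1\<close>.
  Swapping the adjacent entries \<open>\<alpha>, \<beta>\<close> does not change the relative order of any other pair,
  so it leaves every other exponent alone and preserves the sum of the exponents of \<open>\<xi>\<^sub>\<alpha>\<close>
  and \<open>\<xi>\<^sub>\<beta>\<close>, which is all that survives \<open>\<xi>\<^sub>\<alpha> = \<xi>\<^sub>\<beta>\<close>; the substitution for
  \<open>\<xi>\<^sub>\<gamma>\<close> shifts both sides equally. After the substitution the exponent of \<open>\<xi>\<^sub>\<alpha>\<close> is
  \<open>e\<^sub>\<alpha> - e\<^sub>\<gamma>\<close>. If \<open>(\<alpha>, \<gamma>)\<close> is an inversion, the inversion counts of \<open>\<alpha>\<close> and \<open>\<gamma>\<close>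
  differ by at most \<open>(\<alpha> - \<gamma>) + (\<pi> \<gamma> - \<pi> \<alpha>)\<close>, which the strict monotonicity of
  \<open>x\<close> and \<open>y\<close> exactly compensates, so \<open>e\<^sub>\<alpha> \<le> e\<^sub>\<gamma>\<close>.\<close>

lemma sum_fun_apply: "(\<Sum>i\<in>A. f i) v = (\<Sum>i\<in>A. f i v)"
  by (induction A rule: infinite_finite_induct) auto

lemma strict_incr_ge_index_diff:
  fixes f :: "nat \<Rightarrow> int"
  assumes incr: "\<forall>i. 1 \<le> i \<and> i < N \<longrightarrow> f i < f (Suc i)"
    and "1 \<le> a" "a \<le> b" "b \<le> N"
  shows "f a + (int b - int a) \<le> f b"
proof -
  have "b \<le> N \<longrightarrow> f a + (int b - int a) \<le> f b"
    using \<open>a \<le> b\<close>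
  proof (induction b rule: dec_induct)
    case (step n)
    then show ?case using incr[rule_format, of n] \<open>1 \<le> a\<close> by auto
  qed simp
  with assms show ?thesis by blast
qed

lemma sum_indicator_interval:
  assumes "1 \<le> a" "a \<le> b" "b \<le> N"
  shows "(\<Sum>l\<in>{1..N}. if a < l \<and> l \<le> b then 1 else 0 :: int) = int b - int a"
proof -
  have "{l\<in>{1..N}. a < l \<and> l \<le> b} = {a<..b}" using assms by auto
  then show ?thesis using sum.inter_filter[of "{1..N}" "\<lambda>_. 1::int" "\<lambda>l. a < l \<and> l \<le> b"] assms
    by simp
qed

lemma sum_sum_antisym_eq_0:
  fixes f :: "'a \<Rightarrow> 'a \<Rightarrow> 'b::linordered_ab_group_add"
  assumes "\<And>a b. f b a = - f a b"
  shows "(\<Sum>a\<in>A. \<Sum>b\<in>A. f a b) = 0"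
proof -
  have "(\<Sum>a\<in>A. \<Sum>b\<in>A. f a b) = (\<Sum>b\<in>A. \<Sum>a\<in>A. f a b)"
    by (rule sum.swap)
  also have "\<dots> = (\<Sum>b\<in>A. \<Sum>a\<in>A. - f b a)"
    by (intro sum.cong refl) (rule assms)
  also have "\<dots> = - (\<Sum>a\<in>A. \<Sum>b\<in>A. f a b)"
    by (simp add: sum_negf)
  finally show ?thesis by simp
qed

text \<open>For the position map \<open>\<pi> = inv \<sigma>\<close>, \<open>inversion_sign \<pi> v a\<close> is \<open>1\<close> if \<open>(v, a)\<close> is an
  inversion of \<open>\<sigma>\<close>, \<open>-1\<close> if \<open>(a, v)\<close> is one, and \<open>0\<close> otherwise; summed over \<open>a\<close> it is the
  exponent of \<open>\<xi>\<^sub>v\<close> in the inversion product.\<close>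

definition inversion_sign :: "(nat \<Rightarrow> nat) \<Rightarrow> nat \<Rightarrow> nat \<Rightarrow> int" where
  "inversion_sign \<pi> v a =
     (if a < v \<and> \<pi> v < \<pi> a then 1 else 0) - (if v < a \<and> \<pi> a < \<pi> v then 1 else 0)"

lemma inversion_sign_antisym: "inversion_sign \<pi> a v = - inversion_sign \<pi> v a"
  by (auto simp: inversion_sign_def)

lemma inversion_sign_transpose_adjacent:
  assumes "\<pi> v \<notin> {k, Suc k} \<or> \<pi> a \<notin> {k, Suc k}"
  shows "inversion_sign (transpose k (Suc k) \<circ> \<pi>) v a = inversion_sign \<pi> v a"
  using assms by (auto simp: inversion_sign_def transpose_def)

lemma sum_inversion_sign_transpose_adjacent:
  assumes "finite S" "V \<subseteq> S"
    and apart: "\<And>v a. v \<in> V \<Longrightarrow> a \<in> S - V \<Longrightarrow> \<pi> v \<notin> {k, Suc k} \<or> \<pi> a \<notin> {k, Suc k}"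
  shows "(\<Sum>v\<in>V. \<Sum>a\<in>S. inversion_sign (transpose k (Suc k) \<circ> \<pi>) v a)
       = (\<Sum>v\<in>V. \<Sum>a\<in>S. inversion_sign \<pi> v a)"
proof -
  txt \<open>The pairs inside \<open>V\<close> cancel by antisymmetry; all other pairs keep their relative order.\<close>
  have cross_terms: "(\<Sum>v\<in>V. \<Sum>a\<in>S. inversion_sign \<rho> v a) = (\<Sum>v\<in>V. \<Sum>a\<in>S - V. inversion_sign \<rho> v a)"
    for \<rho>
  proof -
    have "(\<Sum>v\<in>V. \<Sum>a\<in>S. inversion_sign \<rho> v a)
        = (\<Sum>v\<in>V. \<Sum>a\<in>S - V. inversion_sign \<rho> v a) + (\<Sum>v\<in>V. \<Sum>a\<in>V. inversion_sign \<rho> v a)"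
      using assms(1,2) by (simp add: sum.subset_diff[of V S] sum.distrib)
    moreover have "(\<Sum>v\<in>V. \<Sum>a\<in>V. inversion_sign \<rho> v a) = 0"
      by (rule sum_sum_antisym_eq_0) (rule inversion_sign_antisym)
    ultimately show ?thesis by simp
  qed
  show ?thesis
    unfolding cross_terms using apart by (intro sum.cong refl inversion_sign_transpose_adjacent) auto
qed

lemma inversion_count_diff_le:
  assumes perm: "\<pi> permutes {1..N}" and v: "v \<in> {1..N}" and w: "w \<in> {1..N}"
    and wv: "w < v" and \<pi>vw: "\<pi> v < \<pi> w"
  shows "(\<Sum>a=1..N. inversion_sign \<pi> v a) - (\<Sum>a=1..N. inversion_sign \<pi> w a)
       \<le> (int v - int w) + (int (\<pi> w) - int (\<pi> v))"
proof -
  define S where "S = {1..N}"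
  have pointwise: "inversion_sign \<pi> v a - inversion_sign \<pi> w a
      \<le> (if w < a \<and> a \<le> v then 1 else 0) + (if \<pi> v < \<pi> a \<and> \<pi> a \<le> \<pi> w then 1 else 0)" for a
  proof -
    have "a \<noteq> v \<Longrightarrow> \<pi> a \<noteq> \<pi> v" "a \<noteq> w \<Longrightarrow> \<pi> a \<noteq> \<pi> w"
      using permutes_inj[OF perm] by (auto dest: injD)
    then show ?thesis using wv \<pi>vw by (auto simp: inversion_sign_def)
  qed
  have "(\<Sum>a\<in>S. inversion_sign \<pi> v a) - (\<Sum>a\<in>S. inversion_sign \<pi> w a)
      \<le> (\<Sum>a\<in>S. if w < a \<and> a \<le> v then 1 else 0) + (\<Sum>a\<in>S. if \<pi> v < \<pi> a \<and> \<pi> a \<le> \<pi> w then 1 else 0)"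
    unfolding sum_subtractf[symmetric] sum.distrib[symmetric] by (rule sum_mono) (rule pointwise)
  also have "(\<Sum>a\<in>S. if \<pi> v < \<pi> a \<and> \<pi> a \<le> \<pi> w then 1 else 0)
      = (\<Sum>p\<in>S. if \<pi> v < p \<and> p \<le> \<pi> w then 1 else (0::int))"
    unfolding S_def by (subst sum.permute[OF perm]) (simp add: comp_def)
  also have "\<dots> = int (\<pi> w) - int (\<pi> v)"
    unfolding S_def using \<pi>vw permutes_in_image[OF perm] v w by (intro sum_indicator_interval) auto
  also have "(\<Sum>a\<in>S. if w < a \<and> a \<le> v then 1 else 0) = int v - int w"
    unfolding S_def using wv v w by (intro sum_indicator_interval) auto
  finally show ?thesis unfolding S_def .
qed

lemma inversions_eq_position_inversions:
  assumes "\<sigma> permutes {1..N}"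
  shows "inversions N \<sigma> = {(b, a) \<in> {1..N} \<times> {1..N}. a < b \<and> inv \<sigma> b < inv \<sigma> a}"
proof -
  have maps: "\<sigma> c \<in> {1..N}" "inv \<sigma> c \<in> {1..N}" if "c \<in> {1..N}" for c
    using permutes_in_image[OF assms] permutes_in_image[OF permutes_inv[OF assms]] that by blast+
  have "(b, a) \<in> inversions N \<sigma> \<longleftrightarrow> b \<in> {1..N} \<and> a \<in> {1..N} \<and> a < b \<and> inv \<sigma> b < inv \<sigma> a"
    for b a
  proof
    assume "(b, a) \<in> inversions N \<sigma>"
    then obtain i j where "b = \<sigma> i" "a = \<sigma> j" "1 \<le> i" "i < j" "j \<le> N" "\<sigma> j < \<sigma> i"
      unfolding inversions_def by blast
    then show "b \<in> {1..N} \<and> a \<in> {1..N} \<and> a < b \<and> inv \<sigma> b < inv \<sigma> a"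
      using maps[of i] maps[of j] assms by (auto simp: permutes_inverses)
  next
    assume h: "b \<in> {1..N} \<and> a \<in> {1..N} \<and> a < b \<and> inv \<sigma> b < inv \<sigma> a"
    then have "1 \<le> inv \<sigma> b" "inv \<sigma> a \<le> N" using maps by auto
    moreover have "\<sigma> (inv \<sigma> b) = b" "\<sigma> (inv \<sigma> a) = a" using permutes_inverses(1)[OF assms] by auto
    ultimately show "(b, a) \<in> inversions N \<sigma>"
      unfolding inversions_def using h by force
  qed
  then show ?thesis by auto
qed

lemma hmon_apply:
  "hmon N x y \<sigma> v =
     (\<Sum>(b, a)\<in>inversions N \<sigma>. (if v = b then 1 else 0) - (if v = a then 1 else 0))
     + (\<Sum>i=1..N. (x i - y (\<sigma> i) - 1) * (if v = \<sigma> i then 1 else 0))"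
  unfolding hmon_def by (simp add: sum_fun_apply case_prod_unfold mvar_def mscale_def)

lemma inversions_exponent_eq_inversion_sign:
  assumes perm: "\<sigma> permutes {1..N}" and v: "v \<in> {1..N}"
  shows "(\<Sum>(b, a)\<in>inversions N \<sigma>. (if v = b then 1 else 0) - (if v = a then 1 else (0::int)))
       = (\<Sum>a=1..N. inversion_sign (inv \<sigma>) v a)"
proof -
  define S where "S = {1..N}"
  define \<pi> where "\<pi> = inv \<sigma>"
  define inv_pair where "inv_pair b a \<longleftrightarrow> a < b \<and> \<pi> b < \<pi> a" for a b
  have "(\<Sum>(b, a)\<in>inversions N \<sigma>. (if v = b then 1 else 0) - (if v = a then 1 else (0::int)))
      = (\<Sum>b\<in>S. \<Sum>a\<in>S. if inv_pair b a then (if v = b then 1 else 0) - (if v = a then 1 else 0) else 0)"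
  proof -
    have "inversions N \<sigma> = {p \<in> S \<times> S. inv_pair (fst p) (snd p)}"
      unfolding inversions_eq_position_inversions[OF perm] S_def inv_pair_def \<pi>_def by auto
    then show ?thesis
      by (simp add: sum.inter_filter sum.cartesian_product case_prod_unfold S_def)
  qed
  also have "\<dots> = (\<Sum>b\<in>S. \<Sum>a\<in>S. if inv_pair b a \<and> v = b then 1 else 0)
      - (\<Sum>b\<in>S. \<Sum>a\<in>S. if inv_pair b a \<and> v = a then 1 else 0)"
    unfolding sum_subtractf[symmetric] by (intro sum.cong refl) auto
  also have "(\<Sum>b\<in>S. \<Sum>a\<in>S. if inv_pair b a \<and> v = b then 1 else 0)
      = (\<Sum>b\<in>S. if b = v then \<Sum>a\<in>S. if a < v \<and> \<pi> v < \<pi> a then 1 else 0 else (0::int))"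
    by (intro sum.cong refl) (auto simp: inv_pair_def)
  also have "\<dots> = (\<Sum>a\<in>S. if a < v \<and> \<pi> v < \<pi> a then 1 else 0)"
    using v by (simp add: S_def)
  also have "(\<Sum>b\<in>S. \<Sum>a\<in>S. if inv_pair b a \<and> v = a then 1 else 0)
      = (\<Sum>a\<in>S. if a = v then \<Sum>b\<in>S. if v < b \<and> \<pi> b < \<pi> v then 1 else 0 else (0::int))"
    by (subst sum.swap) (intro sum.cong refl, auto simp: inv_pair_def)
  also have "\<dots> = (\<Sum>b\<in>S. if v < b \<and> \<pi> b < \<pi> v then 1 else 0)"
    using v by (simp add: S_def)
  finally show ?thesis
    by (simp add: S_def \<pi>_def inversion_sign_def sum_subtractf)
qed

lemma hmon_eq_inversion_sign:
  assumes perm: "\<sigma> permutes {1..N}" and v: "v \<in> {1..N}"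
  shows "hmon N x y \<sigma> v = (\<Sum>a=1..N. inversion_sign (inv \<sigma>) v a) + x (inv \<sigma> v) - y v - 1"
proof -
  have "(\<Sum>i=1..N. (x i - y (\<sigma> i) - 1) * (if v = \<sigma> i then 1 else 0))
      = (\<Sum>i=1..N. if i = inv \<sigma> v then x i - y (\<sigma> i) - 1 else 0)"
    by (intro sum.cong refl) (auto simp: permutes_inverses[OF perm])
  also have "\<dots> = x (inv \<sigma> v) - y v - 1"
    using v permutes_in_image[OF permutes_inv[OF perm]] by (simp add: permutes_inverses[OF perm])
  finally show ?thesis
    unfolding hmon_apply inversions_exponent_eq_inversion_sign[OF perm v] by simp
qed

lemma hmon_outside:
  assumes perm: "\<sigma> permutes {1..N}" and v: "v \<notin> {1..N}"
  shows "hmon N x y \<sigma> v = 0"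
proof -
  have "v \<noteq> \<sigma> i" if "i \<in> {1..N}" for i
    using v permutes_in_image[OF perm] that by metis
  moreover have "v \<noteq> b" "v \<noteq> a" if "(b, a) \<in> inversions N \<sigma>" for a b
    using v that unfolding inversions_eq_position_inversions[OF perm] by auto
  ultimately show ?thesis
    unfolding hmon_apply by (auto intro!: sum.neutral)
qed

lemma adjacent_swap_eq_comp_transpose:
  "\<sigma>(k := \<sigma> (Suc k), Suc k := \<sigma> k) = \<sigma> \<circ> transpose k (Suc k)"
  by (auto simp: fun_eq_iff transpose_def)

lemma permutes_comp_transpose_adjacent:
  assumes "\<sigma> permutes {1..N}" "1 \<le> k" "k < N"
  shows "\<sigma> \<circ> transpose k (Suc k) permutes {1..N}"
  by (rule permutes_compose[OF permutes_swap_id assms(1)]) (use assms in auto)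

lemma inv_comp_transpose:
  assumes "\<sigma> permutes S"
  shows "inv (\<sigma> \<circ> transpose a b) = transpose a b \<circ> inv \<sigma>"
  using o_inv_distrib[OF permutes_bij[OF assms] bij_transpose] by simp

lemma hmon_adjacent_swap_other:
  assumes perm: "\<sigma> permutes {1..N}" and k: "1 \<le> k" "k < N" and v: "v \<notin> {\<sigma> k, \<sigma> (Suc k)}"
  shows "hmon N x y (\<sigma> \<circ> transpose k (Suc k)) v = hmon N x y \<sigma> v"
proof (cases "v \<in> {1..N}")
  case False
  then show ?thesis
    using hmon_outside[OF perm] hmon_outside[OF permutes_comp_transpose_adjacent[OF perm k]] by simp
next
  case True
  have pos: "inv \<sigma> v \<notin> {k, Suc k}"
    using v permutes_inverses(1)[OF perm, of v] by auto
  then have "inversion_sign (transpose k (Suc k) \<circ> inv \<sigma>) v a = inversion_sign (inv \<sigma>) v a" for a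
    by (intro inversion_sign_transpose_adjacent) simp
  then show ?thesis
    using pos
    unfolding hmon_eq_inversion_sign[OF perm True]
      hmon_eq_inversion_sign[OF permutes_comp_transpose_adjacent[OF perm k] True]
      inv_comp_transpose[OF perm]
    by simp
qed

lemma hmon_adjacent_swap_pair:
  assumes perm: "\<sigma> permutes {1..N}" and k: "1 \<le> k" "k < N"
  shows "hmon N x y (\<sigma> \<circ> transpose k (Suc k)) (\<sigma> k) + hmon N x y (\<sigma> \<circ> transpose k (Suc k)) (\<sigma> (Suc k))
       = hmon N x y \<sigma> (\<sigma> k) + hmon N x y \<sigma> (\<sigma> (Suc k))"
proof -
  define S where "S = {1..N}"
  define V where "V = {\<sigma> k, \<sigma> (Suc k)}"
  define \<tau> where "\<tau> = transpose k (Suc k)"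
  have perm': "\<sigma> \<circ> \<tau> permutes S"
    unfolding S_def \<tau>_def by (rule permutes_comp_transpose_adjacent[OF perm k])
  have kS: "k \<in> S" "Suc k \<in> S" using k by (auto simp: S_def)
  have VS: "V \<subseteq> S" using kS permutes_in_image[OF perm[folded S_def]] by (simp add: V_def)
  have ne: "\<sigma> k \<noteq> \<sigma> (Suc k)" using permutes_inj[OF perm] by (metis injD n_not_Suc_n)
  have pair_sum: "hmon N x y \<rho> (\<sigma> k) + hmon N x y \<rho> (\<sigma> (Suc k))
      = (\<Sum>v\<in>V. \<Sum>a\<in>S. inversion_sign (inv \<rho>) v a)
        + x (inv \<rho> (\<sigma> k)) + x (inv \<rho> (\<sigma> (Suc k))) - y (\<sigma> k) - y (\<sigma> (Suc k)) - 2"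
    if "\<rho> permutes S" for \<rho>
    using VS ne that unfolding V_def S_def by (simp add: hmon_eq_inversion_sign)
  have "(\<Sum>v\<in>V. \<Sum>a\<in>S. inversion_sign (\<tau> \<circ> inv \<sigma>) v a) = (\<Sum>v\<in>V. \<Sum>a\<in>S. inversion_sign (inv \<sigma>) v a)"
    unfolding \<tau>_def
  proof (rule sum_inversion_sign_transpose_adjacent)
    fix v a assume "a \<in> S - V"
    then show "inv \<sigma> v \<notin> {k, Suc k} \<or> inv \<sigma> a \<notin> {k, Suc k}"
      using permutes_inverses(1)[OF perm, of a] by (auto simp: V_def)
  qed (use VS in \<open>auto simp: S_def\<close>)
  moreover have "x (\<tau> (inv \<sigma> (\<sigma> k))) + x (\<tau> (inv \<sigma> (\<sigma> (Suc k)))) = x (inv \<sigma> (\<sigma> k)) + x (inv \<sigma> (\<sigma> (Suc k)))"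
    by (simp add: \<tau>_def permutes_inverses(2)[OF perm])
  ultimately show ?thesis
    using pair_sum[OF perm'] pair_sum[OF perm[folded S_def]]
    unfolding inv_comp_transpose[OF perm] \<tau>_def by simp
qed

lemma hmon_le_at_inversion:
  assumes x_mono: "\<forall>i. 1 \<le> i \<and> i < N \<longrightarrow> x i < x (Suc i)"
    and y_mono: "\<forall>i. 1 \<le> i \<and> i < N \<longrightarrow> y i < y (Suc i)"
    and perm: "\<sigma> permutes {1..N}" and i: "i \<in> {1..N}" and j: "j \<in> {1..N}"
    and ij: "i < j" and \<sigma>ij: "\<sigma> j < \<sigma> i"
  shows "hmon N x y \<sigma> (\<sigma> i) \<le> hmon N x y \<sigma> (\<sigma> j)"
proof -
  have \<sigma>S: "\<sigma> i \<in> {1..N}" "\<sigma> j \<in> {1..N}" using permutes_in_image[OF perm] i j by auto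
  have "(\<Sum>a=1..N. inversion_sign (inv \<sigma>) (\<sigma> i) a) - (\<Sum>a=1..N. inversion_sign (inv \<sigma>) (\<sigma> j) a)
      \<le> (int (\<sigma> i) - int (\<sigma> j)) + (int j - int i)"
    using inversion_count_diff_le[OF permutes_inv[OF perm] \<sigma>S \<sigma>ij] ij
    by (simp add: permutes_inverses[OF perm])
  moreover have "x i + (int j - int i) \<le> x j"
    using i j ij by (intro strict_incr_ge_index_diff[OF x_mono]) auto
  moreover have "y (\<sigma> j) + (int (\<sigma> i) - int (\<sigma> j)) \<le> y (\<sigma> i)"
    using \<sigma>S \<sigma>ij by (intro strict_incr_ge_index_diff[OF y_mono]) auto
  ultimately show ?thesis
    unfolding hmon_eq_inversion_sign[OF perm \<sigma>S(1)] hmon_eq_inversion_sign[OF perm \<sigma>S(2)]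
    by (simp add: permutes_inverses[OF perm])
qed

lemma hsubst_None: "hsubst N \<gamma> m None = m \<gamma>"
  unfolding hsubst_def by (simp add: mscale_def mvar_def sum_fun_apply)

lemma hsubst_Some:
  "hsubst N \<gamma> m (Some d) = (if d = \<gamma> then 0 else m d - m \<gamma> * (if d \<in> {1..N} then 1 else 0))"
  unfolding hsubst_def by (auto simp: mscale_def sum_fun_apply mvar_def)

lemma identify_apply: "identify a b e v = (if v = b then 0 else e v) + e b * (if v = a then 1 else 0)"
  unfolding identify_def by (simp add: mscale_def mvar_def)

lemma identify_hsubst_eqI:
  assumes other: "\<And>v. v \<noteq> \<alpha> \<Longrightarrow> v \<noteq> \<beta> \<Longrightarrow> m' v = m v"
    and pair: "m' \<alpha> + m' \<beta> = m \<alpha> + m \<beta>"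
    and \<gamma>: "\<gamma> \<noteq> \<alpha>" "\<gamma> \<noteq> \<beta>"
  shows "identify (Some \<alpha>) (Some \<beta>) (hsubst N \<gamma> m') = identify (Some \<alpha>) (Some \<beta>) (hsubst N \<gamma> m)"
proof
  fix v
  have "m' \<gamma> = m \<gamma>" using other \<gamma> by blast
  then show "identify (Some \<alpha>) (Some \<beta>) (hsubst N \<gamma> m') v = identify (Some \<alpha>) (Some \<beta>) (hsubst N \<gamma> m) v"
    using other pair \<gamma>
    by (cases v) (auto simp: identify_apply hsubst_None hsubst_Some algebra_simps)
qed

lemma identify_hsubst_hmon_adjacent_swap:
  assumes perm: "\<sigma> permutes {1..N}" and k: "1 \<le> k" "k < N"
    and ab: "{\<sigma> k, \<sigma> (Suc k)} = {\<alpha>, \<beta>}" and \<gamma>: "\<gamma> \<noteq> \<alpha>" "\<gamma> \<noteq> \<beta>"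
  shows "identify (Some \<alpha>) (Some \<beta>) (hsubst N \<gamma> (hmon N x y (\<sigma> \<circ> transpose k (Suc k))))
       = identify (Some \<alpha>) (Some \<beta>) (hsubst N \<gamma> (hmon N x y \<sigma>))"
proof (rule identify_hsubst_eqI[OF _ _ \<gamma>])
  show "hmon N x y (\<sigma> \<circ> transpose k (Suc k)) v = hmon N x y \<sigma> v" if "v \<noteq> \<alpha>" "v \<noteq> \<beta>" for v
    using that ab by (intro hmon_adjacent_swap_other[OF perm k]) auto
  show "hmon N x y (\<sigma> \<circ> transpose k (Suc k)) \<alpha> + hmon N x y (\<sigma> \<circ> transpose k (Suc k)) \<beta>
      = hmon N x y \<sigma> \<alpha> + hmon N x y \<sigma> \<beta>"
    using hmon_adjacent_swap_pair[OF perm k] ab by (auto simp: doubleton_eq_iff add.commute)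
qed

lemma hsubst_hmon_nonpos:
  assumes x_mono: "\<forall>i. 1 \<le> i \<and> i < N \<longrightarrow> x i < x (Suc i)"
    and y_mono: "\<forall>i. 1 \<le> i \<and> i < N \<longrightarrow> y i < y (Suc i)"
    and perm: "\<sigma> permutes {1..N}" and i: "i \<in> {1..N}" and j: "j \<in> {1..N}"
    and ij: "i < j" and \<sigma>ij: "\<sigma> j < \<sigma> i"
  shows "hsubst N (\<sigma> j) (hmon N x y \<sigma>) (Some (\<sigma> i)) \<le> 0"
proof -
  have "\<sigma> i \<in> {1..N}" using permutes_in_image[OF perm] i by simp
  then show ?thesis using hmon_le_at_inversion[OF assms] \<sigma>ij by (simp add: hsubst_Some)
qed

lemma hsubst_hmon_nonpos_adjacent:
  assumes x_mono: "\<forall>i. 1 \<le> i \<and> i < N \<longrightarrow> x i < x (Suc i)"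
    and y_mono: "\<forall>i. 1 \<le> i \<and> i < N \<longrightarrow> y i < y (Suc i)"
    and perm: "\<sigma> permutes {1..N}" and k: "1 \<le> k" and d: "d \<in> {\<sigma> k, \<sigma> (Suc k)}"
    and j: "Suc k < j" "j \<le> N" and less: "\<sigma> j < d"
  shows "hsubst N (\<sigma> j) (hmon N x y \<sigma>) (Some d) \<le> 0"
proof -
  obtain i where i: "i \<in> {k, Suc k}" "\<sigma> i = d" using d by blast
  then have "i \<in> {1..N}" "i < j" using j k by auto
  then show ?thesis
    using hsubst_hmon_nonpos[OF x_mono y_mono perm, of i j] i(2) j less by simp
qed

theorem lemma3p5:
  fixes N :: nat and x y :: "nat \<Rightarrow> int" and \<sigma> \<sigma>' :: "nat \<Rightarrow> nat"
    and k \<alpha> \<beta> \<gamma> :: nat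
  assumes x_mono: "\<forall>i. 1 \<le> i \<and> i < N \<longrightarrow> x i < x (Suc i)"
    and y_mono: "\<forall>i. 1 \<le> i \<and> i < N \<longrightarrow> y i < y (Suc i)"
    and perm: "\<sigma> permutes {1..N}"
    and k: "1 \<le> k" "k < N"
    and ab: "{\<sigma> k, \<sigma> (Suc k)} = {\<alpha>, \<beta>}"
    and swap: "\<sigma>' = \<sigma>(k := \<sigma> (Suc k), Suc k := \<sigma> k)"
    and \<gamma>: "\<gamma> \<in> {1..N}" "\<gamma> \<noteq> \<alpha>" "\<gamma> \<noteq> \<beta>"
  shows "identify (Some \<alpha>) (Some \<beta>) (hsubst N \<gamma> (hmon N x y \<sigma>))
           = identify (Some \<alpha>) (Some \<beta>) (hsubst N \<gamma> (hmon N x y \<sigma>'))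
       \<and> ((\<exists>j. Suc k < j \<and> j \<le> N \<and> \<sigma> j = \<gamma>) \<and> \<gamma> < \<alpha> \<and> \<gamma> < \<beta> \<longrightarrow>
           hsubst N \<gamma> (hmon N x y \<sigma>) (Some \<alpha>) \<le> 0 \<and>
           hsubst N \<gamma> (hmon N x y \<sigma>) (Some \<beta>) \<le> 0 \<and>
           hsubst N \<gamma> (hmon N x y \<sigma>') (Some \<alpha>) \<le> 0 \<and>
           hsubst N \<gamma> (hmon N x y \<sigma>') (Some \<beta>) \<le> 0)"
proof (intro conjI impI)
  have \<sigma>': "\<sigma>' = \<sigma> \<circ> transpose k (Suc k)"
    using swap by (simp add: adjacent_swap_eq_comp_transpose)
  have perm': "\<sigma>' permutes {1..N}"
    unfolding \<sigma>' by (rule permutes_comp_transpose_adjacent[OF perm k])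
  have ab': "{\<sigma>' k, \<sigma>' (Suc k)} = {\<alpha>, \<beta>}"
    using ab by (auto simp: \<sigma>')
  show "identify (Some \<alpha>) (Some \<beta>) (hsubst N \<gamma> (hmon N x y \<sigma>))
      = identify (Some \<alpha>) (Some \<beta>) (hsubst N \<gamma> (hmon N x y \<sigma>'))"
    unfolding \<sigma>' using identify_hsubst_hmon_adjacent_swap[OF perm k ab \<gamma>(2,3)] by simp
  assume "(\<exists>j. Suc k < j \<and> j \<le> N \<and> \<sigma> j = \<gamma>) \<and> \<gamma> < \<alpha> \<and> \<gamma> < \<beta>"
  then obtain j where j: "Suc k < j" "j \<le> N" "\<sigma> j = \<gamma>" and \<gamma>_less: "\<gamma> < \<alpha>" "\<gamma> < \<beta>"
    by blast
  have "\<sigma>' j = \<gamma>" using j by (simp add: \<sigma>')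
  have "\<alpha> \<in> {\<sigma> k, \<sigma> (Suc k)}" "\<beta> \<in> {\<sigma> k, \<sigma> (Suc k)}"
    "\<alpha> \<in> {\<sigma>' k, \<sigma>' (Suc k)}" "\<beta> \<in> {\<sigma>' k, \<sigma>' (Suc k)}"
    using ab ab' by simp_all
  then show "hsubst N \<gamma> (hmon N x y \<sigma>) (Some \<alpha>) \<le> 0" "hsubst N \<gamma> (hmon N x y \<sigma>) (Some \<beta>) \<le> 0"
    "hsubst N \<gamma> (hmon N x y \<sigma>') (Some \<alpha>) \<le> 0" "hsubst N \<gamma> (hmon N x y \<sigma>') (Some \<beta>) \<le> 0"
    using hsubst_hmon_nonpos_adjacent[OF x_mono y_mono perm k(1) _ j(1,2)]
      hsubst_hmon_nonpos_adjacent[OF x_mono y_mono perm' k(1) _ j(1,2)]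
      j(3) \<open>\<sigma>' j = \<gamma>\<close> \<gamma>_less by simp_all
qed

end
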